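(* Under Assumption 1, for every $t\in\{0,1,\dots,T\}$, every risk-aversion vector $\beta$, and every $r\in\mathcal R$, the map $p\mapsto V_{t,T}(r,p\,|\,\beta)$ is Lipschitz continuous on $\mathbb R$.
   Context: Model (dynamic EV charging). Fix a horizon $T\in\{1,2,\dots\}$, a battery capacity $R_{\max}>0$, a maximal charge per period $x_{\max}>0$, an initial charge $R_0\in[0,R_{\max}]$, an access fee $c_f\in\mathbb R$, a reference price $p_{\mathrm{ref}}>0$, a constant $\gamma_h\ge 0$, a deterministic seasonality function $g:\mathbb R\to\mathbb R$, and price parameters $\kappa_Y>0$, $\mu_Y\in\mathbb R$, $\sigma_Y>0$, $\lambda_J\in(0,1)$, $\mu_J\in\mathbb R$, $\sigma_J>0$. Spot prices are $P_t=g(t)+Y_t$ with $Y_{t+1}=Y_te^{-\kappa_Y}+\mu_Y(1-e^{-\kappa_Y})+\xi_{t+1}+X_{t+1}J_{t+1}$, where $(\xi_t)$ are i.i.d. $\mathcal N\big(0,\sigma_Y^2(1-e^{-2\kappa_Y})/(2\kappa_Y)\big)$, $(X_t)$ are i.i.d. Bernoulli$(\lambda_J)$, $(J_t)$ are i.i.d. $\mathcal N(\mu_J,\sigma_J^2)$, all mutually independent. Define $\psi_{t+1}=g(t+1)-g(t)e^{-\kappa_Y}+\mu_Y(1-e^{-\kappa_Y})+\xi_{t+1}+X_{t+1}J_{t+1}$ and $\psi_{t+1,Y}=\psi_{t+1}-g(t+1)$ (so given $P_t=p$, $P_{t+1}$ has the law of $pe^{-\kappa_Y}+\psi_{t+1}$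 and $Y_{t+1}$ that of $pe^{-\kappa_Y}+\psi_{t+1,Y}$). Let $\mathcal R=[0,R_{\max}]$, $\mathcal X(r)=[0,\min\{R_{\max}-r,x_{\max}\}]$, and shortage $h(r)=\min\{R_0+Tx_{\max},R_{\max}\}-r$. Let $\gamma_Y:\mathbb R\to(0,\infty)$ be a compensation function. Assumption 1: $\gamma_Y$ is positive, strictly increasing, and $L_{\gamma_Y}$-Lipschitz continuous with $L_{\gamma_Y}\le p_{\mathrm{ref}}^{-1}e^{2\kappa_Y}$. Risk measures. For $\alpha\in(0,1)$: $\mathrm{VaR}_\alpha(X)=\inf\{u:\mathbf P(X\le u)>\alpha\}$, $\mathrm{CVaR}_\alpha(X)=\inf_u\{u+(1-\alpha)^{-1}\mathbf E[(X-u)^+]\}$. For $\beta_t=(\lambda_t,\alpha_t)\in[0,1]\times(0,1)$, $\rho_{\beta_t}(X)=(1-\lambda_t)\mathbf E[X]+\lambda_t\mathrm{CVaR}_{\alpha_t}(X)$. A risk-aversion vector is $\beta=(\lambda_0,\alpha_0,\dots,\lambda_T,\alpha_T)$. Value functions. For $r\in\mathcal R$, $p\in\mathbb R$: $V_{T,T}(r,p\,|\,\beta)=\rho_{\beta_T}\big[\big(1+\gamma_h h(r)+\gamma_Y(pe^{-\kappa_Y}+\psi_{T+1,Y})\big)h(r)p_{\mathrm{ref}}\big]$, and for $t=T-1,\dots,0$: $\tilde V_{t,T}(r,p\,|\,\beta)=\rho_{\beta_t}\big[V_{t+1,T}(r,pe^{-\kappa_Y}+\psi_{t+1}\,|\,\beta)\big]$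 (post-decision value function) and $V_{t,T}(r,p\,|\,\beta)=\min_{x\in\mathcal X(r)}\{xp-c_f+\tilde V_{t,T}(r+x,p\,|\,\beta)\}$. *)

theory Defs
  imports "HOL-Probability.Probability"
begin

definition expect :: "'a measure \<Rightarrow> ('a \<Rightarrow> real) \<Rightarrow> real" where
  "expect M X = (\<integral>\<omega>. X \<omega> \<partial>M)"

definition VaR :: "'a measure \<Rightarrow> real \<Rightarrow> ('a \<Rightarrow> real) \<Rightarrow> real" where
  "VaR M \<alpha> X = Inf {u. measure M {\<omega> \<in> space M. X \<omega> \<le> u} > \<alpha>}"

definition CVaR :: "'a measure \<Rightarrow> real \<Rightarrow> ('a \<Rightarrow> real) \<Rightarrow> real" where
  "CVaR M \<alpha> X = (INF u. u + (1 / (1 - \<alpha>)) * expect M (\<lambda>\<omega>. max (X \<omega> - u) 0))"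

definition rho :: "'a measure \<Rightarrow> real \<Rightarrow> real \<Rightarrow> ('a \<Rightarrow> real) \<Rightarrow> real" where
  "rho M l \<alpha> X = (1 - l) * expect M X + l * CVaR M \<alpha> X"

record evparams =
  ev_T :: nat
  ev_Rmax :: real
  ev_xmax :: real
  ev_R0 :: real
  ev_cf :: real
  ev_pref :: real
  ev_gh :: real
  ev_g :: "real \<Rightarrow> real"
  ev_kY :: real
  ev_muY :: real
  ev_sigY :: real
  ev_lamJ :: real
  ev_muJ :: real
  ev_sigJ :: real
  ev_gY :: "real \<Rightarrow> real"

definition xi_sd :: "evparams \<Rightarrow> real" where
  "xi_sd P = sqrt (ev_sigY P ^ 2 * (1 - exp (- 2 * ev_kY P)) / (2 * ev_kY P))"

definition noise_space :: "evparams \<Rightarrow> (real \<times> bool \<times> real) measure" where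
  "noise_space P =
     density lborel (normal_density 0 (xi_sd P))
     \<Otimes>\<^sub>M (measure_pmf (bernoulli_pmf (ev_lamJ P))
     \<Otimes>\<^sub>M density lborel (normal_density (ev_muJ P) (ev_sigJ P)))"

definition noise :: "(real \<times> bool \<times> real) \<Rightarrow> real" where
  "noise \<omega> = (case \<omega> of (\<xi>, x, j) \<Rightarrow> \<xi> + (if x then j else 0))"

definition psi :: "evparams \<Rightarrow> nat \<Rightarrow> (real \<times> bool \<times> real) \<Rightarrow> real" where
  "psi P t \<omega> = ev_g P (real t + 1) - ev_g P (real t) * exp (- ev_kY P)
      + ev_muY P * (1 - exp (- ev_kY P)) + noise \<omega>"

definition psiY :: "evparams \<Rightarrow> nat \<Rightarrow> (real \<times> bool \<times> real) \<Rightarrow> real" where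
  "psiY P t \<omega> = psi P t \<omega> - ev_g P (real t + 1)"

definition shortage :: "evparams \<Rightarrow> real \<Rightarrow> real" where
  "shortage P r = min (ev_R0 P + real (ev_T P) * ev_xmax P) (ev_Rmax P) - r"

section \<open>Value functions; beta given by lam t = lambda_t and alph t = alpha_t\<close>

text \<open>W n = V_{T-n,T}, defined by backward recursion on the number n of remaining steps.\<close>
primrec W :: "evparams \<Rightarrow> (nat \<Rightarrow> real) \<Rightarrow> (nat \<Rightarrow> real) \<Rightarrow> nat \<Rightarrow> real \<Rightarrow> real \<Rightarrow> real" where
  "W P lam alph 0 r p =
     rho (noise_space P) (lam (ev_T P)) (alph (ev_T P))
       (\<lambda>\<omega>. (1 + ev_gh P * shortage P r
              + ev_gY P (p * exp (- ev_kY P) + psiY P (ev_T P) \<omega>)) * shortage P r * ev_pref P)"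
| "W P lam alph (Suc n) r p =
     (let t = ev_T P - Suc n;
          Vpost = (\<lambda>r'. rho (noise_space P) (lam t) (alph t)
                     (\<lambda>\<omega>. W P lam alph n r' (p * exp (- ev_kY P) + psi P t \<omega>)))
      in (INF x \<in> {0 .. min (ev_Rmax P - r) (ev_xmax P)}. x * p - ev_cf P + Vpost (r + x)))"

definition Vpost :: "evparams \<Rightarrow> (nat \<Rightarrow> real) \<Rightarrow> (nat \<Rightarrow> real) \<Rightarrow> nat \<Rightarrow> real \<Rightarrow> real \<Rightarrow> real" where
  "Vpost P lam alph t r p = rho (noise_space P) (lam t) (alph t)
      (\<lambda>\<omega>. W P lam alph (ev_T P - Suc t) r (p * exp (- ev_kY P) + psi P t \<omega>))"

definition V :: "evparams \<Rightarrow> (nat \<Rightarrow> real) \<Rightarrow> (nat \<Rightarrow> real) \<Rightarrow> nat \<Rightarrow> real \<Rightarrow> real \<Rightarrow> real" where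
  "V P lam alph t r p = W P lam alph (ev_T P - t) r p"

definition valid_params :: "evparams \<Rightarrow> bool" where
  "valid_params P \<longleftrightarrow> ev_T P \<ge> 1 \<and> ev_Rmax P > 0 \<and> ev_xmax P > 0
     \<and> 0 \<le> ev_R0 P \<and> ev_R0 P \<le> ev_Rmax P \<and> ev_pref P > 0 \<and> ev_gh P \<ge> 0
     \<and> ev_kY P > 0 \<and> ev_sigY P > 0 \<and> 0 < ev_lamJ P \<and> ev_lamJ P < 1 \<and> ev_sigJ P > 0
     \<and> (\<forall>y. ev_gY P y > 0)"

definition assumption1 :: "evparams \<Rightarrow> bool" where
  "assumption1 P \<longleftrightarrow> (\<forall>y. ev_gY P y > 0) \<and> strict_mono (ev_gY P)
     \<and> (\<exists>L. L-lipschitz_on UNIV (ev_gY P) \<and> L \<le> exp (2 * ev_kY P) / ev_pref P)"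

definition risk_aversion :: "evparams \<Rightarrow> (nat \<Rightarrow> real) \<Rightarrow> (nat \<Rightarrow> real) \<Rightarrow> bool" where
  "risk_aversion P lam alph \<longleftrightarrow>
     (\<forall>t \<le> ev_T P. 0 \<le> lam t \<and> lam t \<le> 1 \<and> 0 < alph t \<and> alph t < 1)"

end

theory Submission imports Defs begin

text \<open>
  The mixture \<open>\<rho>\<close> of expectation and CVaR is monotone and translation equivariant, hence
  1-Lipschitz for the supremum distance of integrable random variables. The price enters each
  stage only through the affine map \<open>p \<mapsto> p exp(-\<kappa>\<^sub>Y) + \<psi>\<close>, so a Lipschitz value at the next stage
  gives a Lipschitz post-decision value, and the terminal value is Lipschitz because \<open>\<gamma>\<^sub>Y\<close> is.
  The ordering cost \<open>x p\<close> adds at most \<open>x\<^sub>m\<^sub>a\<^sub>x\<close> to the constant, and a pointwise infimum of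
  uniformly Lipschitz functions is Lipschitz, so backward induction goes through with a constant
  uniform in the charge level \<open>r\<close>.
\<close>

lemma integrable_pair_fst:
  fixes f :: "'a \<Rightarrow> real"
  assumes "prob_space M2" "integrable M1 f"
  shows "integrable (M1 \<Otimes>\<^sub>M M2) (\<lambda>x. f (fst x))"
proof -
  interpret prob_space M2 by fact
  have "integrable (distr (M1 \<Otimes>\<^sub>M M2) M1 fst) f"
    using assms(2) by (simp add: distr_pair_fst)
  then show ?thesis by (rule integrable_distr[rotated]) simp
qed

lemma integrable_pair_snd:
  fixes f :: "'b \<Rightarrow> real"
  assumes "prob_space M1" "prob_space M2" "integrable M2 f"
  shows "integrable (M1 \<Otimes>\<^sub>M M2) (\<lambda>x. f (snd x))"
proof -
  interpret p1: prob_space M1 by fact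
  interpret p2: prob_space M2 by fact
  interpret pair_sigma_finite M2 M1 by unfold_locales
  have "integrable (M2 \<Otimes>\<^sub>M M1) (\<lambda>x. f (fst x))"
    using integrable_pair_fst assms by blast
  from integrable_product_swap[OF this] show ?thesis
    by (simp add: case_prod_unfold)
qed

lemma integrable_normal_density_id:
  "0 < s \<Longrightarrow> integrable (density lborel (normal_density m s)) (\<lambda>x. x)"
  by (subst integrable_density)
     (auto simp: normal_density_nonneg integrable_normal_moment_nz_1
        mult.commute[of _ "normal_density m s _"])

lemma xi_sd_pos: "valid_params P \<Longrightarrow> 0 < xi_sd P"
  unfolding xi_sd_def valid_params_def
  by (auto intro!: divide_pos_pos mult_pos_pos)

lemma prob_space_noise_space: "valid_params P \<Longrightarrow> prob_space (noise_space P)"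
  unfolding noise_space_def
  by (intro prob_space_pair prob_space_normal_density prob_space_measure_pmf)
     (auto simp: valid_params_def xi_sd_pos)

lemma noise_measurable [measurable]: "noise \<in> borel_measurable (noise_space P)"
  unfolding noise_space_def noise_def by (simp add: case_prod_unfold) measurable

lemma integrable_noise:
  assumes v: "valid_params P"
  shows "integrable (noise_space P) noise"
proof -
  let ?M1 = "density lborel (normal_density 0 (xi_sd P))"
  let ?M2 = "measure_pmf (bernoulli_pmf (ev_lamJ P))"
  let ?M3 = "density lborel (normal_density (ev_muJ P) (ev_sigJ P))"
  have M1: "prob_space ?M1" and M3: "prob_space ?M3"
    using v by (auto intro: prob_space_normal_density simp: valid_params_def xi_sd_pos)
  have M23: "prob_space (?M2 \<Otimes>\<^sub>M ?M3)"
    by (intro prob_space_pair prob_space_measure_pmf M3)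
  have jump: "integrable (?M2 \<Otimes>\<^sub>M ?M3) (\<lambda>x. if fst x then snd x else 0)"
  proof (rule Bochner_Integration.integrable_bound)
    show "integrable (?M2 \<Otimes>\<^sub>M ?M3) snd"
      using integrable_pair_snd[OF prob_space_measure_pmf M3 integrable_normal_density_id] v
      by (simp add: valid_params_def)
  qed (auto split: if_splits)
  have "integrable (?M1 \<Otimes>\<^sub>M (?M2 \<Otimes>\<^sub>M ?M3))
          (\<lambda>x. fst x + (if fst (snd x) then snd (snd x) else 0))"
    using integrable_pair_fst[OF M23 integrable_normal_density_id[OF xi_sd_pos[OF v]]]
      integrable_pair_snd[OF M1 M23 jump]
    by (intro Bochner_Integration.integrable_add) simp_all
  then show ?thesis
    unfolding noise_space_def noise_def by (simp add: case_prod_unfold)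
qed

lemma integrable_lipschitz_comp_noise:
  fixes g :: "real \<Rightarrow> real"
  assumes v: "valid_params P" and g: "L-lipschitz_on UNIV g"
  shows "integrable (noise_space P) (\<lambda>\<omega>. g (a + noise \<omega>))"
proof -
  interpret prob_space "noise_space P" using prob_space_noise_space[OF v] .
  have L: "0 \<le> L" using lipschitz_on_nonneg[OF g] .
  have bound: "integrable (noise_space P) (\<lambda>\<omega>. \<bar>g 0\<bar> + L * (\<bar>a\<bar> + \<bar>noise \<omega>\<bar>))"
    using integrable_noise[OF v]
    by (intro Bochner_Integration.integrable_add integrable_mult_right) auto
  have [measurable]: "g \<in> borel_measurable borel"
    using lipschitz_on_continuous_on[OF g] by (rule borel_measurable_continuous_onI)
  have "\<bar>g (a + x)\<bar> \<le> \<bar>\<bar>g 0\<bar> + L * (\<bar>a\<bar> + \<bar>x\<bar>)\<bar>" for x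
  proof -
    have "\<bar>g (a + x)\<bar> \<le> \<bar>g 0\<bar> + L * \<bar>a + x\<bar>"
      using lipschitz_onD[OF g, of "a + x" 0] by (simp add: dist_real_def)
    also have "\<dots> \<le> \<bar>g 0\<bar> + L * (\<bar>a\<bar> + \<bar>x\<bar>)"
      using L by (simp add: mult_left_mono)
    also have "\<dots> = \<bar>\<bar>g 0\<bar> + L * (\<bar>a\<bar> + \<bar>x\<bar>)\<bar>"
      using L by simp
    finally show ?thesis .
  qed
  then show ?thesis
    by (intro Bochner_Integration.integrable_bound[OF bound] AE_I2) auto
qed

lemma psi_eq_shifted_noise: "\<exists>c. psi P t = (\<lambda>\<omega>. c + noise \<omega>)"
  unfolding psi_def by (auto simp: fun_eq_iff)

lemma psiY_eq_shifted_noise: "\<exists>c. psiY P t = (\<lambda>\<omega>. c + noise \<omega>)"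
  unfolding psiY_def psi_def by (rule exI) (auto simp: fun_eq_iff)

lemma expect_le_CVaR_objective:
  assumes "prob_space M" "integrable M X" "0 < \<alpha>" "\<alpha> < 1"
  shows "expect M X \<le> u + (1 / (1 - \<alpha>)) * expect M (\<lambda>\<omega>. max (X \<omega> - u) 0)"
proof -
  interpret prob_space M by fact
  have "expect M X - u = expect M (\<lambda>\<omega>. X \<omega> - u)"
    unfolding expect_def using assms(2) by (simp add: prob_space)
  also have "\<dots> \<le> expect M (\<lambda>\<omega>. max (X \<omega> - u) 0)"
    unfolding expect_def by (rule integral_mono) (use assms(2) in auto)
  finally have excess: "expect M X - u \<le> expect M (\<lambda>\<omega>. max (X \<omega> - u) 0)" .
  have "0 \<le> expect M (\<lambda>\<omega>. max (X \<omega> - u) 0)"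
    unfolding expect_def by (rule Bochner_Integration.integral_nonneg) auto
  moreover have "1 \<le> 1 / (1 - \<alpha>)" using assms by (simp add: field_simps)
  ultimately have "1 * expect M (\<lambda>\<omega>. max (X \<omega> - u) 0)
      \<le> (1 / (1 - \<alpha>)) * expect M (\<lambda>\<omega>. max (X \<omega> - u) 0)"
    by (intro mult_right_mono)
  with excess show ?thesis by linarith
qed

lemma rho_le_add_const:
  assumes M: "prob_space M" and X: "integrable M X" and Y: "integrable M Y"
    and le: "\<And>\<omega>. \<omega> \<in> space M \<Longrightarrow> X \<omega> \<le> Y \<omega> + c"
    and l: "0 \<le> l" "l \<le> 1" and \<alpha>: "0 < \<alpha>" "\<alpha> < 1"
  shows "rho M l \<alpha> X \<le> rho M l \<alpha> Y + c"
proof -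
  interpret prob_space M by fact
  define k where "k = 1 / (1 - \<alpha>)"
  have k: "0 < k" using \<alpha> unfolding k_def by simp
  have "expect M X \<le> expect M (\<lambda>\<omega>. Y \<omega> + c)"
    unfolding expect_def by (rule integral_mono) (use X Y le in auto)
  also have "\<dots> = expect M Y + c"
    unfolding expect_def using Y by (simp add: prob_space)
  finally have E: "expect M X \<le> expect M Y + c" .
  have bdd: "bdd_below (range (\<lambda>u. u + k * expect M (\<lambda>\<omega>. max (X \<omega> - u) 0)))"
    using expect_le_CVaR_objective[OF M X \<alpha>] unfolding k_def by (intro bdd_belowI2) auto
  have "CVaR M \<alpha> X - c \<le> u + k * expect M (\<lambda>\<omega>. max (Y \<omega> - u) 0)" for u
  proof -
    have "CVaR M \<alpha> X \<le> (u + c) + k * expect M (\<lambda>\<omega>. max (X \<omega> - (u + c)) 0)"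
      unfolding CVaR_def k_def[symmetric] by (rule cINF_lower[OF bdd]) simp
    also have "expect M (\<lambda>\<omega>. max (X \<omega> - (u + c)) 0) \<le> expect M (\<lambda>\<omega>. max (Y \<omega> - u) 0)"
      unfolding expect_def by (rule integral_mono) (use X Y le in \<open>fastforce+\<close>)
    finally show ?thesis using k by simp
  qed
  then have "CVaR M \<alpha> X - c \<le> CVaR M \<alpha> Y"
    unfolding CVaR_def k_def[symmetric] by (intro cINF_greatest) auto
  then have C: "CVaR M \<alpha> X \<le> CVaR M \<alpha> Y + c" by simp
  have "rho M l \<alpha> X \<le> (1 - l) * (expect M Y + c) + l * (CVaR M \<alpha> Y + c)"
    unfolding rho_def using E C l by (intro add_mono mult_left_mono) auto
  also have "\<dots> = rho M l \<alpha> Y + c"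
    by (simp add: rho_def algebra_simps)
  finally show ?thesis .
qed

lemma rho_dist_le:
  assumes "prob_space M" "integrable M X" "integrable M Y"
    and "\<And>\<omega>. \<omega> \<in> space M \<Longrightarrow> \<bar>X \<omega> - Y \<omega>\<bar> \<le> c"
    and "0 \<le> l" "l \<le> 1" "0 < \<alpha>" "\<alpha> < 1"
  shows "\<bar>rho M l \<alpha> X - rho M l \<alpha> Y\<bar> \<le> c"
  using rho_le_add_const[of M X Y c l \<alpha>] rho_le_add_const[of M Y X c l \<alpha>] assms
  by (fastforce simp: abs_le_iff)

lemma rho_affine_lipschitz:
  assumes M: "prob_space M" and g: "L-lipschitz_on UNIV g"
    and int: "\<And>b. integrable M (\<lambda>\<omega>. g (b + Z \<omega>))"
    and l: "0 \<le> l" "l \<le> 1" and \<alpha>: "0 < \<alpha>" "\<alpha> < 1"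
  shows "(L * \<bar>e\<bar>)-lipschitz_on UNIV (\<lambda>p. rho M l \<alpha> (\<lambda>\<omega>. g (p * e + Z \<omega>)))"
proof (rule lipschitz_onI)
  show "0 \<le> L * \<bar>e\<bar>" using lipschitz_on_nonneg[OF g] by simp
  fix p q :: real
  have "\<bar>g (p * e + z) - g (q * e + z)\<bar> \<le> L * \<bar>e\<bar> * \<bar>p - q\<bar>" for z
  proof -
    have "\<bar>g (p * e + z) - g (q * e + z)\<bar> \<le> L * \<bar>(p * e + z) - (q * e + z)\<bar>"
      using lipschitz_onD[OF g, of "p * e + z" "q * e + z"] by (simp add: dist_real_def)
    also have "\<bar>(p * e + z) - (q * e + z)\<bar> = \<bar>e * (p - q)\<bar>"
      by (simp add: algebra_simps)
    also have "\<dots> = \<bar>e\<bar> * \<bar>p - q\<bar>"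
      by (rule abs_mult)
    finally show ?thesis by (simp add: mult.assoc)
  qed
  then show "dist (rho M l \<alpha> (\<lambda>\<omega>. g (p * e + Z \<omega>))) (rho M l \<alpha> (\<lambda>\<omega>. g (q * e + Z \<omega>)))
      \<le> L * \<bar>e\<bar> * dist p q"
    unfolding dist_real_def by (intro rho_dist_le[OF M int int _ l \<alpha>])
qed

text \<open>
  Without a lower bound the infimum is the junk value \<open>Inf X\<close> of an unbounded set, which
  is nevertheless the same for every such set.
\<close>
lemma Inf_real_not_bdd_below_eq:
  fixes X Y :: "real set"
  assumes "\<not> bdd_below X" "\<not> bdd_below Y"
  shows "Inf X = Inf Y"
proof -
  have "(\<lambda>z. \<forall>x\<in>uminus ` Z. x \<le> z) = (\<lambda>z. False)" if "\<not> bdd_below Z" for Z :: "real set"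
    using that bdd_above_uminus[of Z] unfolding bdd_above_def by (auto simp: fun_eq_iff)
  then show ?thesis using assms unfolding Inf_real_def Sup_real_def by simp
qed

lemma lipschitz_on_INF:
  fixes f :: "'i \<Rightarrow> 'a::metric_space \<Rightarrow> real"
  assumes K: "0 \<le> K" and f: "\<And>i. i \<in> S \<Longrightarrow> K-lipschitz_on U (f i)"
  shows "K-lipschitz_on U (\<lambda>p. INF i\<in>S. f i p)"
proof (rule lipschitz_onI[OF _ K])
  fix p q assume pq: "p \<in> U" "q \<in> U"
  have shift: "f i x \<le> f i y + K * dist x y" if "i \<in> S" "x \<in> {p, q}" "y \<in> {p, q}" for i x y
    using lipschitz_onD[OF f[OF that(1)], of x y] that pq by (auto simp: dist_real_def)
  have bdd_transfer: "bdd_below ((\<lambda>i. f i y) ` S)"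
    if bdd: "bdd_below ((\<lambda>i. f i x) ` S)" and xy: "x \<in> {p, q}" "y \<in> {p, q}" for x y
  proof -
    obtain m where "\<forall>v\<in>(\<lambda>i. f i x) ` S. m \<le> v"
      using bdd unfolding bdd_below_def by blast
    then have "\<And>i. i \<in> S \<Longrightarrow> m - K * dist x y \<le> f i y"
      using shift[OF _ xy] by force
    then show ?thesis by (rule bdd_belowI2)
  qed
  show "dist (INF i\<in>S. f i p) (INF i\<in>S. f i q) \<le> K * dist p q"
  proof (cases "S \<noteq> {} \<and> bdd_below ((\<lambda>i. f i p) ` S)")
    case True
    have INF_le: "(INF i\<in>S. f i x) \<le> (INF i\<in>S. f i y) + K * dist x y"
      if "x \<in> {p, q}" "y \<in> {p, q}" for x y
    proof -
      have "(INF i\<in>S. f i x) - K * dist x y \<le> (INF i\<in>S. f i y)"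
      proof (rule cINF_greatest)
        fix i assume i: "i \<in> S"
        have "(INF i\<in>S. f i x) \<le> f i x"
          using True bdd_transfer[of p x] that by (intro cINF_lower[OF _ i]) auto
        with shift[OF i that] show "(INF i\<in>S. f i x) - K * dist x y \<le> f i y" by simp
      qed (use True in auto)
      then show ?thesis by simp
    qed
    show ?thesis
      using INF_le[of p q] INF_le[of q p] by (simp add: dist_real_def dist_commute abs_le_iff)
  next
    case False
    then consider "S = {}" | "\<not> bdd_below ((\<lambda>i. f i p) ` S)" "\<not> bdd_below ((\<lambda>i. f i q) ` S)"
      using bdd_transfer[of q p] by auto
    then show ?thesis
    proof cases
      case 1
      then show ?thesis using K by simp
    next
      case 2
      then have "(INF i\<in>S. f i p) = (INF i\<in>S. f i q)"
        by (rule Inf_real_not_bdd_below_eq)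
      then show ?thesis using K by simp
    qed
  qed
qed

lemma W_0_lipschitz:
  assumes v: "valid_params P" and a1: "assumption1 P" and ra: "risk_aversion P lam alph"
  shows "\<exists>L. \<forall>r\<in>{0..ev_Rmax P}. L-lipschitz_on UNIV (W P lam alph 0 r)"
proof -
  obtain LY where LY: "LY-lipschitz_on UNIV (ev_gY P)"
    using a1 unfolding assumption1_def by blast
  define e where "e = exp (- ev_kY P)"
  define s0 where "s0 = \<bar>min (ev_R0 P + real (ev_T P) * ev_xmax P) (ev_Rmax P)\<bar> + ev_Rmax P"
  have pref: "0 < ev_pref P" using v by (simp add: valid_params_def)
  have LY0: "0 \<le> LY" using lipschitz_on_nonneg[OF LY] .
  have "(s0 * ev_pref P * LY * e)-lipschitz_on UNIV (W P lam alph 0 r)"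
    if r: "r \<in> {0..ev_Rmax P}" for r
  proof -
    define s where "s = shortage P r"
    define g where "g y = (1 + ev_gh P * s) * s * ev_pref P + (s * ev_pref P) * ev_gY P y" for y
    have g_lip: "(\<bar>s * ev_pref P\<bar> * LY)-lipschitz_on UNIV g"
      unfolding g_def using lipschitz_on_add[OF lipschitz_on_constant lipschitz_on_cmult_real[OF LY]]
      by simp
    have int: "integrable (noise_space P) (\<lambda>\<omega>. g (b + psiY P (ev_T P) \<omega>))" for b
    proof -
      obtain c where "psiY P (ev_T P) = (\<lambda>\<omega>. c + noise \<omega>)"
        using psiY_eq_shifted_noise by blast
      then show ?thesis
        using integrable_lipschitz_comp_noise[OF v g_lip, of "b + c"] by (simp add: add.assoc)
    qed
    have W_0: "W P lam alph 0 r = (\<lambda>p. rho (noise_space P) (lam (ev_T P)) (alph (ev_T P))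
                                  (\<lambda>\<omega>. g (p * e + psiY P (ev_T P) \<omega>)))"
      unfolding g_def s_def e_def by (simp add: fun_eq_iff algebra_simps)
    have bound: "\<bar>s * ev_pref P\<bar> * LY * \<bar>e\<bar> \<le> s0 * ev_pref P * LY * e"
      using r pref LY0 unfolding s_def s0_def e_def shortage_def
      by (auto simp: abs_mult intro!: mult_right_mono)
    have la: "0 \<le> lam (ev_T P)" "lam (ev_T P) \<le> 1" "0 < alph (ev_T P)" "alph (ev_T P) < 1"
      using ra by (auto simp: risk_aversion_def)
    show ?thesis unfolding W_0
      by (rule lipschitz_on_le[OF rho_affine_lipschitz[OF prob_space_noise_space[OF v] g_lip int la]
            bound])
  qed
  then show ?thesis by blast
qed

lemma W_Suc_lipschitz:
  assumes v: "valid_params P" and ra: "risk_aversion P lam alph"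
    and L: "\<And>r. r \<in> {0..ev_Rmax P} \<Longrightarrow> L-lipschitz_on UNIV (W P lam alph n r)"
  shows "\<exists>K. \<forall>r\<in>{0..ev_Rmax P}. K-lipschitz_on UNIV (W P lam alph (Suc n) r)"
proof -
  define e where "e = exp (- ev_kY P)"
  define t where "t = ev_T P - Suc n"
  have la: "0 \<le> lam t" "lam t \<le> 1" "0 < alph t" "alph t < 1"
    using ra unfolding risk_aversion_def t_def by auto
  have L0: "0 \<le> L" using L[of 0] v by (auto simp: valid_params_def intro: lipschitz_on_nonneg)
  have "(ev_xmax P + L * e)-lipschitz_on UNIV (W P lam alph (Suc n) r)"
    if r: "r \<in> {0..ev_Rmax P}" for r
  proof -
    define S where "S = {0 .. min (ev_Rmax P - r) (ev_xmax P)}"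
    define f where "f x p = x * p - ev_cf P + rho (noise_space P) (lam t) (alph t)
                              (\<lambda>\<omega>. W P lam alph n (r + x) (p * e + psi P t \<omega>))" for x p
    have W_Suc: "W P lam alph (Suc n) r = (\<lambda>p. INF x\<in>S. f x p)"
      unfolding f_def S_def t_def e_def by (rule ext) (simp only: W.simps Let_def)
    have f_lip: "(ev_xmax P + L * e)-lipschitz_on UNIV (f x)" if x: "x \<in> S" for x
    proof -
      have Lx: "L-lipschitz_on UNIV (W P lam alph n (r + x))"
        using x r by (intro L) (auto simp: S_def)
      obtain c where c: "psi P t = (\<lambda>\<omega>. c + noise \<omega>)"
        using psi_eq_shifted_noise by blast
      have "integrable (noise_space P) (\<lambda>\<omega>. W P lam alph n (r + x) (b + psi P t \<omega>))" for b
        using integrable_lipschitz_comp_noise[OF v Lx, of "b + c"] by (simp add: c add.assoc)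
      then have "(L * \<bar>e\<bar>)-lipschitz_on UNIV
          (\<lambda>p. rho (noise_space P) (lam t) (alph t) (\<lambda>\<omega>. W P lam alph n (r + x) (p * e + psi P t \<omega>)))"
        by (rule rho_affine_lipschitz[OF prob_space_noise_space[OF v] Lx _ la])
      then have "(\<bar>x\<bar> * 1 + 0 + L * \<bar>e\<bar>)-lipschitz_on UNIV (f x)"
        unfolding f_def
        by (rule lipschitz_on_add[OF lipschitz_on_diff[OF
              lipschitz_on_cmult_real[OF lipschitz_on_id] lipschitz_on_constant]])
      moreover have "\<bar>x\<bar> * 1 + 0 + L * \<bar>e\<bar> \<le> ev_xmax P + L * e"
        using x unfolding S_def e_def by auto
      ultimately show ?thesis by (rule lipschitz_on_le)
    qed
    have "0 \<le> ev_xmax P + L * e"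
      using L0 v by (simp add: e_def valid_params_def)
    then show ?thesis
      unfolding W_Suc by (rule lipschitz_on_INF[OF _ f_lip])
  qed
  then show ?thesis by blast
qed

lemma W_lipschitz:
  assumes "valid_params P" "assumption1 P" "risk_aversion P lam alph"
  shows "\<exists>L. \<forall>r\<in>{0..ev_Rmax P}. L-lipschitz_on UNIV (W P lam alph n r)"
proof (induction n)
  case 0
  show ?case using W_0_lipschitz[OF assms] .
next
  case (Suc n)
  then obtain L where "\<forall>r\<in>{0..ev_Rmax P}. L-lipschitz_on UNIV (W P lam alph n r)" ..
  then show ?case by (intro W_Suc_lipschitz[OF assms(1,3)]) blast
qed

theorem lemma1:
  fixes P :: evparams and lam alph :: "nat \<Rightarrow> real" and t :: nat and r :: real
  assumes "valid_params P"
    and "assumption1 P"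
    and "risk_aversion P lam alph"
    and "t \<le> ev_T P"
    and "r \<in> {0 .. ev_Rmax P}"
  shows "\<exists>L. L-lipschitz_on UNIV (\<lambda>p. V P lam alph t r p)"
proof -
  obtain L where "\<forall>r\<in>{0..ev_Rmax P}. L-lipschitz_on UNIV (W P lam alph (ev_T P - t) r)"
    using W_lipschitz[OF assms(1-3)] by blast
  then have "L-lipschitz_on UNIV (W P lam alph (ev_T P - t) r)"
    using assms(5) by blast
  then show ?thesis
    unfolding V_def by blast
qed

end
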